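(* Let $\mu$ be a probability density on $\mathbb{R}^d$ and $f^*:\mathbb{R}^d\to\{\pm1\}$ satisfy the regularity assumption below, and let $\mathbf{x}_1,\dots,\mathbf{x}_m$ be i.i.d. with density $\mu$. For $\mathbf{x}\in\mathbb{R}^d$ and $k\in\mathbb{N}$, let $A^k_\mathbf{x}$ be the event that the $k$ nearest neighbors $\mathbf{x}_{(1)},\dots,\mathbf{x}_{(k)}$ of $\mathbf{x}$ among $\mathbf{x}_1,\dots,\mathbf{x}_m$ all satisfy $f^*(\mathbf{x}_{(i)})=f^*(\mathbf{x})$. Then for every fixed $k$ and for almost every $\mathbf{x}\in\mathrm{supp}(\mu)$, $\lim_{m\to\infty}\Pr[A^k_\mathbf{x}]=1$.
   Context: Regularity assumption: $\mu$ is continuous at Lebesgue-almost every point of $\mathbb{R}^d$, and for Lebesgue-almost every $\mathbf{x}$ there is a neighborhood of $\mathbf{x}$ on which $f^*$ is constant. *)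

theory Defs
  imports "HOL-Probability.Probability"
begin

definition density_support :: "('a::euclidean_space \<Rightarrow> real) \<Rightarrow> 'a set" where
  "density_support mu = {x. \<forall>e>0. emeasure (density lborel (\<lambda>y. ennreal (mu y))) (ball x e) > 0}"

text \<open>Law of the sample (x_0,...,x_{m-1}) of m i.i.d. points with density mu
(completed, so that events involving f only up to null sets are measurable).\<close>
definition sample_law :: "('a::euclidean_space \<Rightarrow> real) \<Rightarrow> nat \<Rightarrow> (nat \<Rightarrow> 'a) measure" where
  "sample_law mu m = completion (PiM {..<m} (\<lambda>_. density lborel (\<lambda>y. ennreal (mu y))))"

text \<open>Event A^k_x: every sample point among the k nearest neighbours of x (a point x_j
is among them if fewer than k sample points are strictly closer to x; ties, which have
probability zero, are all included) has the same label as x.\<close>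
definition knn_agree_event ::
    "('a::euclidean_space \<Rightarrow> int) \<Rightarrow> nat \<Rightarrow> 'a \<Rightarrow> nat \<Rightarrow> (nat \<Rightarrow> 'a) set" where
  "knn_agree_event f k x m =
     {X \<in> PiE {..<m} (\<lambda>_. UNIV).
        \<forall>j<m. card {i. i < m \<and> dist x (X i) < dist x (X j)} < k \<longrightarrow> f (X j) = f x}"

end

theory Submission
  imports Defs
begin

text \<open>
Fix a point x such that f is constant on a ball B around x with probability p > 0; almost
every point of the support is of this kind. Once k of the m sample points lie in B, every
sample point outside B has at least k sample points strictly closer to x, so all k nearest
neighbours lie in B and carry the label f x. Splitting the sample into k blocks of m div k
points, fewer than k points lie in B only if some block misses B entirely, which has
probability at most k (1 - p)^(m div k), and this tends to 0. The event is measurable for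
the completed product measure because, off the null set where f is not locally constant,
the test f y = f x is membership in the open set interior (f -` {f x}).
\<close>

lemma sets_completion_AE_eq:
  assumes "S \<in> sets M" "A \<subseteq> space M" "AE x in M. x \<in> A \<longleftrightarrow> x \<in> S"
  shows "A \<in> sets (completion M)"
proof -
  have [measurable]: "Measurable.pred (completion M) (\<lambda>x. x \<in> A \<longleftrightarrow> x \<notin> S)"
    using assms(3) by (intro sets_completion_AE) simp
  have [measurable]: "S \<in> sets (completion M)"
    using assms(1) by simp
  have "Measurable.pred (completion M) (\<lambda>x. (x \<in> A \<longleftrightarrow> x \<notin> S) \<longleftrightarrow> x \<notin> S)"
    by measurable
  then have "Measurable.pred (completion M) (\<lambda>x. x \<in> A)"
    by (rule measurable_cong[THEN iffD1, rotated]) auto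
  moreover have "{x \<in> space M. x \<in> A} = A"
    using assms(2) by blast
  ultimately show ?thesis
    by (simp add: pred_def)
qed

lemma card_ge_if_blocks_hit:
  fixes k n m :: nat
  assumes "k * n \<le> m" and hit: "\<forall>t<k. \<exists>i\<in>{t*n..<t*n+n}. P i"
  shows "k \<le> card {i. i < m \<and> P i}"
proof -
  obtain g where g: "\<And>t. t < k \<Longrightarrow> g t \<in> {t*n..<t*n+n} \<and> P (g t)"
    using hit by metis
  have "g t div n = t" if "t < k" for t
    using g[OF that] by (intro div_nat_eqI) (auto simp: algebra_simps)
  then have "inj_on g {..<k}"
    by (intro inj_on_inverseI[where g = "\<lambda>i. i div n"]) simp
  moreover have "g ` {..<k} \<subseteq> {i. i < m \<and> P i}"
  proof clarify
    fix t assume "t < k"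
    then have "t * n + n \<le> k * n"
      using mult_le_mono1[of "Suc t" k n] by simp
    then show "g t < m \<and> P (g t)"
      using g[OF \<open>t < k\<close>] \<open>k * n \<le> m\<close> by auto
  qed
  ultimately show ?thesis
    using card_inj_on_le[of g "{..<k}" "{i. i < m \<and> P i}"] by simp
qed

lemma knn_agree_eventI_ball:
  fixes x :: "'a::euclidean_space"
  assumes X: "X \<in> PiE {..<m} (\<lambda>_. UNIV)" and const: "ball x e \<subseteq> f -` {f x}"
    and many: "k \<le> card {i. i < m \<and> X i \<in> ball x e}"
  shows "X \<in> knn_agree_event f k x m"
  unfolding knn_agree_event_def
proof (intro CollectI conjI X allI impI)
  fix j assume "j < m" and few: "card {i. i < m \<and> dist x (X i) < dist x (X j)} < k"
  have "X j \<in> ball x e"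
  proof (rule ccontr)
    assume "X j \<notin> ball x e"
    then have "{i. i < m \<and> X i \<in> ball x e} \<subseteq> {i. i < m \<and> dist x (X i) < dist x (X j)}"
      by auto
    then have "card {i. i < m \<and> X i \<in> ball x e} \<le> card {i. i < m \<and> dist x (X i) < dist x (X j)}"
      by (intro card_mono) auto
    then show False
      using few many by linarith
  qed
  then show "f (X j) = f x"
    using const by auto
qed

lemma measure_PiM_PiE_avoid:
  assumes "prob_space M" and "finite I" and B: "B \<in> sets M" and "J \<subseteq> I"
  shows "measure (PiM I (\<lambda>_. M)) (PiE I (\<lambda>i. if i \<in> J then space M - B else space M))
    = (1 - measure M B) ^ card J"
proof -
  interpret M: prob_space M by fact
  interpret P: finite_product_prob_space "\<lambda>_. M" I
    by unfold_locales fact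
  have "P.prob (PiE I (\<lambda>i. if i \<in> J then space M - B else space M))
      = (\<Prod>i\<in>I. M.prob (if i \<in> J then space M - B else space M))"
    using B by (simp add: P.prob_times)
  also have "\<dots> = (\<Prod>i\<in>I. if i \<in> J then 1 - M.prob B else 1)"
    using B by (intro prod.cong) (auto simp: M.prob_compl M.prob_space)
  also have "\<dots> = (1 - M.prob B) ^ card (I \<inter> J)"
    by (simp only: prod.If_cases[of I "\<lambda>i. i \<in> J"] \<open>finite I\<close>
        Collect_mem_eq prod_constant power_one mult_1_right)
  finally show ?thesis
    using \<open>J \<subseteq> I\<close> by (simp add: Int_absorb1)
qed

lemma measure_PiM_few_hits_le:
  fixes m k :: nat
  assumes "prob_space M" and B: "B \<in> sets M"
  shows "measure (PiM {..<m} (\<lambda>_. M))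
      {X \<in> space (PiM {..<m} (\<lambda>_. M)). card {i. i < m \<and> X i \<in> B} < k}
    \<le> real k * (1 - measure M B) ^ (m div k)"
proof -
  interpret P: prob_space "PiM {..<m} (\<lambda>_. M)"
    by (intro prob_space_PiM assms(1))
  define n where "n = m div k"
  have "k * n \<le> m"
    unfolding n_def by simp
  define block where "block t = {t*n..<t*n+n}" for t
  have block_sub: "block t \<subseteq> {..<m}" if "t < k" for t
    using mult_le_mono1[of "Suc t" k n] that \<open>k * n \<le> m\<close> by (auto simp: block_def)
  define E where "E t = PiE {..<m} (\<lambda>i. if i \<in> block t then space M - B else space M)" for t
  have E_sets: "E t \<in> P.events" for t
    using B by (simp add: E_def sets_PiM_I_finite)
  have "{X \<in> space (PiM {..<m} (\<lambda>_. M)). card {i. i < m \<and> X i \<in> B} < k} \<subseteq> (\<Union>t<k. E t)"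
  proof clarify
    fix X assume X: "X \<in> space (PiM {..<m} (\<lambda>_. M))" and few: "card {i. i < m \<and> X i \<in> B} < k"
    then obtain t where "t < k" and miss: "\<forall>i\<in>block t. X i \<notin> B"
      using card_ge_if_blocks_hit[OF \<open>k * n \<le> m\<close>, of "\<lambda>i. X i \<in> B"] unfolding block_def
      by (meson leD)
    then have "X \<in> E t"
      using X by (auto simp: E_def space_PiM PiE_iff)
    then show "X \<in> (\<Union>t<k. E t)"
      using \<open>t < k\<close> by blast
  qed
  then have "P.prob {X \<in> space (PiM {..<m} (\<lambda>_. M)). card {i. i < m \<and> X i \<in> B} < k}
      \<le> P.prob (\<Union>t<k. E t)"
    using E_sets by (intro P.finite_measure_mono) auto
  also have "\<dots> \<le> (\<Sum>t<k. P.prob (E t))"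
    using E_sets by (intro P.finite_measure_subadditive_finite) auto
  also have "\<dots> = (\<Sum>t<k. (1 - measure M B) ^ n)"
    using measure_PiM_PiE_avoid[OF assms(1) _ B block_sub]
    by (intro sum.cong) (auto simp: E_def block_def)
  finally show ?thesis
    by (simp add: n_def)
qed

lemma knn_agree_event_sets_completion:
  fixes M :: "'a::euclidean_space measure" and f :: "'a \<Rightarrow> int" and m k :: nat
  assumes "prob_space M" and M: "sets M = sets borel"
    and loc_const: "AE y in M. y \<in> interior (f -` {f y})"
  shows "knn_agree_event f k x m \<in> sets (completion (PiM {..<m} (\<lambda>_. M)))"
proof -
  let ?P = "PiM {..<m} (\<lambda>_. M)"
  define V where "V = interior (f -` {f x})"
  have label_iff: "f y = f x \<longleftrightarrow> y \<in> V" if "y \<in> interior (f -` {f y})" for y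
    using that interior_subset[of "f -` {f x}"] unfolding V_def by auto
  have [measurable]: "V \<in> sets M"
    unfolding V_def M by simp
  have [measurable]: "(\<lambda>y. dist x y) \<in> borel_measurable M"
    using M by (simp add: measurable_cong_sets[OF M refl])
  have space_M: "space M = UNIV"
    using sets_eq_imp_space_eq[OF M] by simp
  let ?S = "{X \<in> space ?P. \<forall>j<m. card {i. i < m \<and> dist x (X i) < dist x (X j)} < k \<longrightarrow> X j \<in> V}"
  have "?S \<in> sets ?P"
    by measurable
  moreover have "knn_agree_event f k x m \<subseteq> space ?P"
    by (auto simp: knn_agree_event_def space_PiM space_M)
  moreover have "AE X in ?P. \<forall>j\<in>{..<m}. X j \<in> interior (f -` {f (X j)})"
    using assms(1) loc_const by (intro eventually_ball_finite ballI AE_PiM_component) auto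
  then have "AE X in ?P. X \<in> knn_agree_event f k x m \<longleftrightarrow> X \<in> ?S"
    by eventually_elim (auto simp: knn_agree_event_def space_PiM space_M label_iff)
  ultimately show ?thesis
    by (rule sets_completion_AE_eq)
qed

lemma measure_knn_agree_event_ge:
  fixes M :: "'a::euclidean_space measure" and m k :: nat
  assumes "prob_space M" and M: "sets M = sets borel" and const: "ball x e \<subseteq> f -` {f x}"
    and A: "knn_agree_event f k x m \<in> sets (completion (PiM {..<m} (\<lambda>_. M)))"
  shows "1 - real k * (1 - measure M (ball x e)) ^ (m div k)
    \<le> measure (completion (PiM {..<m} (\<lambda>_. M))) (knn_agree_event f k x m)"
proof -
  let ?P = "PiM {..<m} (\<lambda>_. M)"
  interpret P: prob_space ?P
    by (intro prob_space_PiM assms(1))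
  interpret C: prob_space "completion ?P"
    by (rule P.prob_space_completion)
  have [measurable]: "ball x e \<in> sets M"
    using M by simp
  let ?few = "{X \<in> space ?P. card {i. i < m \<and> X i \<in> ball x e} < k}"
  have few_sets: "?few \<in> P.events"
    by measurable
  have "P.prob (space ?P - ?few) = 1 - P.prob ?few"
    using few_sets by (rule P.prob_compl)
  then have "1 - real k * (1 - measure M (ball x e)) ^ (m div k) \<le> P.prob (space ?P - ?few)"
    using measure_PiM_few_hits_le[OF assms(1), of "ball x e" m k] by simp
  also have "\<dots> = C.prob (space ?P - ?few)"
    by (rule measure_completion[symmetric, OF sets.compl_sets[OF few_sets]])
  also have "\<dots> \<le> C.prob (knn_agree_event f k x m)"
  proof (rule C.finite_measure_mono[OF _ A], rule subsetI)
    fix X assume X: "X \<in> space ?P - ?few"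
    have "space ?P = PiE {..<m} (\<lambda>_. UNIV)"
      using sets_eq_imp_space_eq[OF M] by (simp add: space_PiM)
    then have "X \<in> PiE {..<m} (\<lambda>_. UNIV)" and "k \<le> card {i. i < m \<and> X i \<in> ball x e}"
      using X by auto
    then show "X \<in> knn_agree_event f k x m"
      using const by (intro knn_agree_eventI_ball)
  qed
  finally show ?thesis .
qed

lemma tendsto_of_nat_mult_power_div:
  fixes q :: real and k :: nat
  assumes "\<bar>q\<bar> < 1"
  shows "(\<lambda>m. real k * q ^ (m div k)) \<longlonglongrightarrow> 0"
proof (cases "k = 0")
  case False
  have "(\<lambda>m. q ^ m) \<longlonglongrightarrow> 0"
    using assms by (intro LIMSEQ_power_zero) simp
  then have "(\<lambda>m. q ^ (m div k)) \<longlonglongrightarrow> 0"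
    using False by (intro filterlim_compose[OF _ filterlim_at_top_div_const_nat]) simp_all
  then show ?thesis
    by (rule tendsto_mult_right_zero)
qed simp

lemma tendsto_measure_knn_agree_event:
  fixes M :: "'a::euclidean_space measure" and f :: "'a \<Rightarrow> int" and k :: nat
  assumes "prob_space M" and M: "sets M = sets borel"
    and loc_const: "AE y in M. y \<in> interior (f -` {f y})"
    and x_const: "x \<in> interior (f -` {f x})"
    and x_supp: "\<forall>e>0. 0 < emeasure M (ball x e)"
  shows "(\<lambda>m. measure (completion (PiM {..<m} (\<lambda>_. M))) (knn_agree_event f k x m)) \<longlonglongrightarrow> 1"
proof -
  interpret M: prob_space M by fact
  obtain e where "e > 0" and const: "ball x e \<subseteq> f -` {f x}"
    using x_const by (auto simp: mem_interior)
  define p where "p = M.prob (ball x e)"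
  have "0 < p"
    using x_supp \<open>e > 0\<close> by (simp add: p_def M.emeasure_eq_measure)
  then have "\<bar>1 - p\<bar> < 1"
    by (simp add: p_def)
  have lim: "(\<lambda>m. 1 - real k * (1 - p) ^ (m div k)) \<longlonglongrightarrow> 1"
    using tendsto_diff[OF tendsto_const tendsto_of_nat_mult_power_div[OF \<open>\<bar>1 - p\<bar> < 1\<close>]]
    by simp
  have lower: "1 - real k * (1 - p) ^ (m div k)
      \<le> measure (completion (PiM {..<m} (\<lambda>_. M))) (knn_agree_event f k x m)" for m
    unfolding p_def
    using assms(1) M const knn_agree_event_sets_completion[OF assms(1) M loc_const]
    by (rule measure_knn_agree_event_ge)
  have upper: "measure (completion (PiM {..<m} (\<lambda>_. M))) (knn_agree_event f k x m) \<le> 1" for m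
  proof -
    interpret P: prob_space "PiM {..<m} (\<lambda>_. M)"
      by (intro prob_space_PiM assms(1))
    interpret C: prob_space "completion (PiM {..<m} (\<lambda>_. M))"
      by (rule P.prob_space_completion)
    show ?thesis
      by (rule C.prob_le_1)
  qed
  show ?thesis
    using tendsto_sandwich[OF always_eventually[OF allI[OF lower]]
        always_eventually[OF allI[OF upper]] lim tendsto_const] .
qed

theorem lemma6:
  fixes mu :: "'a::euclidean_space \<Rightarrow> real" and f :: "'a \<Rightarrow> int" and k :: nat
  assumes mu_meas: "mu \<in> borel_measurable lborel"
    and mu_nonneg: "\<And>x. mu x \<ge> 0"
    and mu_prob: "(\<integral>\<^sup>+ x. ennreal (mu x) \<partial>lborel) = 1"
    and f_pm1: "\<And>x. f x \<in> {-1, 1}"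
    and mu_cont: "AE x in lborel. isCont mu x"
    and f_loc_const: "AE x in lborel. \<exists>e>0. \<forall>y\<in>ball x e. f y = f x"
  shows "AE x in lborel. x \<in> density_support mu \<longrightarrow>
           (\<lambda>m. measure (sample_law mu m) (knn_agree_event f k x m)) \<longlonglongrightarrow> 1"
proof -
  define M where "M = density lborel (\<lambda>y. ennreal (mu y))"
  have sets_M: "sets M = sets borel"
    by (simp add: M_def)
  have prob_M: "prob_space M"
    using mu_meas mu_prob by (intro prob_spaceI) (simp add: M_def emeasure_density)
  have loc_const_iff: "(\<exists>e>0. \<forall>y\<in>ball x e. f y = f x) \<longleftrightarrow> x \<in> interior (f -` {f x})" for x
    by (simp add: mem_interior subset_eq)
  have "AE y in M. y \<in> interior (f -` {f y})"
    unfolding M_def using mu_meas f_loc_const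
    by (subst AE_density) (auto simp: loc_const_iff elim!: eventually_mono)
  note tendsto_x = tendsto_measure_knn_agree_event[OF prob_M sets_M this]
  have support_iff: "x \<in> density_support mu \<longleftrightarrow> (\<forall>e>0. 0 < emeasure M (ball x e))" for x
    by (simp add: density_support_def M_def)
  have sample_law: "sample_law mu m = completion (PiM {..<m} (\<lambda>_. M))" for m
    by (simp add: sample_law_def M_def)
  from f_loc_const show ?thesis
  proof eventually_elim
    case (elim x)
    then show ?case
      using tendsto_x[of x k] by (simp add: loc_const_iff support_iff sample_law)
  qed
qed

end
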